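(* Let $S_1=(-y+x^2-y^2)\frac{\partial}{\partial x}+x(1+2y)\frac{\partial}{\partial y}$, let $H_1(x,y)=\frac{x^2+y^2}{1+2y}$, and for $\epsilon\in\mathbb{R}$ let $$\Phi_{1,\epsilon}(x,y)=\left(\frac{-2\epsilon x^{2}+(1-\epsilon^{2})x-2\epsilon y^{2}-2\epsilon y}{D(x,y)},\ \frac{-2\epsilon^{2}x^{2}+2\epsilon x-2\epsilon^{2}y^{2}+(1-\epsilon^{2})y}{D(x,y)}\right),$$ $D(x,y)=4\epsilon^{2}x^{2}+4\epsilon^{2}y^{2}+4\epsilon^{2}y+\epsilon^{2}-4\epsilon x+1$, be the KHK map of $S_1$. Let $Y_1=x(1+2y)\frac{\partial}{\partial x}+(y-x^2+y^2)\frac{\partial}{\partial y}$ and let $\Psi_{1,\delta}$ be the KHK map of $Y_1$ with step $\delta$. Then: (a) $H_1$ is a first integral of $\Phi_{1,\epsilon}$; (b) $S_1$ is a Lie symmetry of $\Phi_{1,\epsilon}$; (c) $\Phi_{1,\epsilon}$ has an invariant measure with density $\nu=1/(1+2y)^2$; (d) for all $\epsilon,\delta\in\mathbb{R}$, $\Psi_{1,\delta}\circ\Phi_{1,\epsilon}=\Phi_{1,\epsilon}\circ\Psi_{1,\delta}$.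
   Context: The KHK map with step $\epsilon$ of a quadratic planar vector field $X$ is $\mathbf{x}\mapsto\mathbf{x}+2\epsilon\left(I-\epsilon\,\mathrm{D}X(\mathbf{x})\right)^{-1}X(\mathbf{x})$, where $\mathrm{D}X$ is the Jacobian matrix of $X$. A function $H$ is a first integral of a map $F$ if $H\circ F=H$. A vector field $X$ is a Lie symmetry of $F$ if $X(F(\mathbf{x}))=DF(\mathbf{x})\,X(\mathbf{x})$. *)

theory Defs
  imports "HOL-Analysis.Analysis"
begin

definition pt :: "real \<Rightarrow> real \<Rightarrow> real^2" where
  "pt a b = vector [a, b]"

definition jac :: "(real^2 \<Rightarrow> real^2) \<Rightarrow> real^2 \<Rightarrow> real^2^2" where
  "jac F p = matrix (frechet_derivative F (at p))"

definition khk :: "(real^2 \<Rightarrow> real^2) \<Rightarrow> real \<Rightarrow> real^2 \<Rightarrow> real^2" where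
  "khk X e p = p + (2 * e) *\<^sub>R (matrix_inv (mat 1 - e *\<^sub>R jac X p) *v X p)"

definition khk_defined :: "(real^2 \<Rightarrow> real^2) \<Rightarrow> real \<Rightarrow> real^2 \<Rightarrow> bool" where
  "khk_defined X e p \<longleftrightarrow> invertible (mat 1 - e *\<^sub>R jac X p)"

definition S1 :: "real^2 \<Rightarrow> real^2" where
  "S1 p = (let x = p$1; y = p$2 in pt (- y + x^2 - y^2) (x * (1 + 2*y)))"

definition Y1 :: "real^2 \<Rightarrow> real^2" where
  "Y1 p = (let x = p$1; y = p$2 in pt (x * (1 + 2*y)) (y - x^2 + y^2))"

definition H1 :: "real^2 \<Rightarrow> real" where
  "H1 p = (let x = p$1; y = p$2 in (x^2 + y^2) / (1 + 2*y))"

definition Dden :: "real \<Rightarrow> real^2 \<Rightarrow> real" where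
  "Dden e p = (let x = p$1; y = p$2 in
     4*e^2*x^2 + 4*e^2*y^2 + 4*e^2*y + e^2 - 4*e*x + 1)"

definition Phi1 :: "real \<Rightarrow> real^2 \<Rightarrow> real^2" where
  "Phi1 e p = (let x = p$1; y = p$2 in
     pt ((-2*e*x^2 + (1 - e^2)*x - 2*e*y^2 - 2*e*y) / Dden e p)
        ((-2*e^2*x^2 + 2*e*x - 2*e^2*y^2 + (1 - e^2)*y) / Dden e p))"

definition Psi1 :: "real \<Rightarrow> real^2 \<Rightarrow> real^2" where
  "Psi1 d = khk Y1 d"

definition nu1 :: "real^2 \<Rightarrow> real" where
  "nu1 p = 1 / (1 + 2 * p$2)^2"

definition first_integral_on :: "(real^2) set \<Rightarrow> (real^2 \<Rightarrow> real) \<Rightarrow> (real^2 \<Rightarrow> real^2) \<Rightarrow> bool" where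
  "first_integral_on U H F \<longleftrightarrow> (\<forall>p\<in>U. H (F p) = H p)"

definition lie_symmetry_on :: "(real^2) set \<Rightarrow> (real^2 \<Rightarrow> real^2) \<Rightarrow> (real^2 \<Rightarrow> real^2) \<Rightarrow> bool" where
  "lie_symmetry_on U X F \<longleftrightarrow>
     (\<forall>p\<in>U. F differentiable (at p) \<and> X (F p) = jac F p *v X p)"

text \<open>Invariant measure with density nu (Jacobian criterion):
  nu(F p) |det DF(p)| = nu(p).\<close>
definition invariant_density_on :: "(real^2) set \<Rightarrow> (real^2 \<Rightarrow> real) \<Rightarrow> (real^2 \<Rightarrow> real^2) \<Rightarrow> bool" where
  "invariant_density_on U \<nu> F \<longleftrightarrow>
     (\<forall>p\<in>U. F differentiable (at p) \<and> \<nu> (F p) * \<bar>det (jac F p)\<bar> = \<nu> p)"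

end

theory Submission
  imports Defs
begin

text \<open>In the complex coordinate z = x + iy the field S_1 is the holomorphic Riccati field
  f(z) = z^2 + iz, and Y_1 = -i S_1. The Jacobian of a holomorphic planar map is multiplication
  by its complex derivative, so the KHK map of f with step h is z + 2h f(z) / (1 - h f'(z)), which
  for quadratic f is a Moebius map with matrix I + hK, K depending only on f. Thus Phi_{1,e} and
  Psi_{1,d} are the Moebius maps of I + eK and I - idK, and they commute. Moreover, with
  q(z) = 1 - ie - 2ez (so that D = |q|^2), Phi(z) = (1 + ie) z / q(z) and
  Phi(z) + i = (1 - ie)(z + i) / q(z) with |1 + ie| = |1 - ie|,
  so |Phi|^2 and 1 + 2 Im Phi = |Phi + i|^2 - |Phi|^2 are both multiplied by (1 + e^2) / |q|^2,
  which gives the first integral. Finally Phi'(z) = (1 + e^2) / q(z)^2, whose squared modulus is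
  the Jacobian determinant, yields the invariant density, and f(Phi(z)) = Phi'(z) f(z) is the
  Lie symmetry.\<close>

lemma pt_nth [simp]: "pt a b $ 1 = a" "pt a b $ 2 = b"
  by (simp_all add: pt_def)

definition complex_of_vec :: "real^2 \<Rightarrow> complex" where
  "complex_of_vec p = Complex (p$1) (p$2)"

definition vec_of_complex :: "complex \<Rightarrow> real^2" where
  "vec_of_complex z = pt (Re z) (Im z)"

lemma Re_complex_of_vec [simp]: "Re (complex_of_vec p) = p$1"
  and Im_complex_of_vec [simp]: "Im (complex_of_vec p) = p$2"
  by (simp_all add: complex_of_vec_def)

lemma vec_of_complex_nth [simp]: "vec_of_complex z $ 1 = Re z" "vec_of_complex z $ 2 = Im z"
  by (simp_all add: vec_of_complex_def)

lemma vec_of_complex_eq_iff: "vec_of_complex z = p \<longleftrightarrow> z = complex_of_vec p"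
  by (auto simp: vec_eq_iff forall_2 complex_eq_iff)

lemma vec_of_complex_inverse [simp]: "complex_of_vec (vec_of_complex z) = z"
  and complex_of_vec_inverse [simp]: "vec_of_complex (complex_of_vec p) = p"
  by (simp_all add: complex_of_vec_def vec_of_complex_def vec_eq_iff forall_2)

lemma bounded_linear_complex_of_vec: "bounded_linear complex_of_vec"
  unfolding linear_conv_bounded_linear [symmetric]
  by (auto simp: linear_iff complex_of_vec_def complex_eq_iff)

lemma bounded_linear_vec_of_complex: "bounded_linear vec_of_complex"
  unfolding linear_conv_bounded_linear [symmetric]
  by (auto simp: linear_iff vec_eq_iff forall_2)

definition planar :: "(complex \<Rightarrow> complex) \<Rightarrow> real^2 \<Rightarrow> real^2" where
  "planar g p = vec_of_complex (g (complex_of_vec p))"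

definition cmult_matrix :: "complex \<Rightarrow> real^2^2" where
  "cmult_matrix w = vector [vector [Re w, - Im w], vector [Im w, Re w]]"

lemma cmult_matrix_mult: "cmult_matrix w *v v = vec_of_complex (w * complex_of_vec v)"
  by (simp add: vec_eq_iff forall_2 matrix_vector_mult_def sum_2 cmult_matrix_def)

lemma det_cmult_matrix: "det (cmult_matrix w) = (cmod w)^2"
  unfolding cmod_power2 by (simp add: det_2 cmult_matrix_def power2_eq_square)

lemma mat_1_minus_cmult_matrix: "mat 1 - r *\<^sub>R cmult_matrix w = cmult_matrix (1 - of_real r * w)"
  by (simp add: vec_eq_iff forall_2 mat_def cmult_matrix_def)

lemma invertible_cmult_matrix: "invertible (cmult_matrix w) \<longleftrightarrow> w \<noteq> 0"
  by (simp add: invertible_det_nz det_cmult_matrix)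

lemma matrix_inv_cmult_matrix_mult:
  assumes "w \<noteq> 0"
  shows "matrix_inv (cmult_matrix w) *v v = vec_of_complex (complex_of_vec v / w)"
proof -
  have "invertible (cmult_matrix w)"
    using assms by (simp add: invertible_cmult_matrix)
  then have "cmult_matrix w ** matrix_inv (cmult_matrix w) = mat 1"
    unfolding invertible_def matrix_inv_def by (rule someI2_ex) auto
  then have "cmult_matrix w *v (matrix_inv (cmult_matrix w) *v v) = v"
    by (simp add: matrix_vector_mul_assoc)
  then have "complex_of_vec (matrix_inv (cmult_matrix w) *v v) = complex_of_vec v / w"
    using assms by (auto simp: cmult_matrix_mult vec_of_complex_eq_iff field_simps)
  then show ?thesis
    by (metis complex_of_vec_inverse)
qed

lemma has_derivative_planar:
  assumes "(g has_field_derivative g') (at (complex_of_vec p))"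
  shows "(planar g has_derivative (*v) (cmult_matrix g')) (at p)"
proof -
  have "((\<lambda>q. g (complex_of_vec q)) has_derivative (\<lambda>v. g' * complex_of_vec v)) (at p)"
    using has_derivative_compose
        [OF bounded_linear_imp_has_derivative [OF bounded_linear_complex_of_vec]
          assms [unfolded has_field_derivative_def]]
    by (simp add: mult.commute)
  from bounded_linear.has_derivative [OF bounded_linear_vec_of_complex this]
  show ?thesis
    by (simp add: planar_def [abs_def] cmult_matrix_mult [abs_def])
qed

lemma jac_planar:
  assumes "(g has_field_derivative g') (at (complex_of_vec p))"
  shows "jac (planar g) p = cmult_matrix g'"
  using frechet_derivative_at [OF has_derivative_planar [OF assms], symmetric] by (simp add: jac_def)

lemma khk_defined_planar:
  assumes "(f has_field_derivative f') (at (complex_of_vec p))"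
  shows "khk_defined (planar f) h p \<longleftrightarrow> 1 - of_real h * f' \<noteq> 0"
  by (simp add: khk_defined_def jac_planar [OF assms] mat_1_minus_cmult_matrix
      invertible_cmult_matrix)

lemma khk_planar:
  assumes "(f has_field_derivative f') (at (complex_of_vec p))" and "1 - of_real h * f' \<noteq> 0"
  shows "khk (planar f) h p = planar (\<lambda>z. z + 2 * of_real h * f z / (1 - of_real h * f')) p"
proof -
  have "2 * of_real h * f z / (1 - of_real h * f') = (2 * h) *\<^sub>R (f z / (1 - of_real h * f'))" for z
    by (simp add: scaleR_conv_of_real)
  then show ?thesis
    using assms(2)
    by (simp add: khk_def jac_planar [OF assms(1)] mat_1_minus_cmult_matrix
        matrix_inv_cmult_matrix_mult)
      (simp add: planar_def vec_eq_iff forall_2)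
qed

definition riccati :: "complex \<Rightarrow> complex \<Rightarrow> complex \<Rightarrow> complex \<Rightarrow> complex" where
  "riccati a b c z = a * z^2 + b * z + c"

text \<open>The Moebius map with matrix I + h [[b, 2c], [-2a, -b]]. Where its denominator does not
  vanish it is the KHK map z + 2h f(z) / (1 - h f'(z)) of f = riccati a b c with (complex) step h.\<close>

definition riccati_khk :: "complex \<Rightarrow> complex \<Rightarrow> complex \<Rightarrow> complex \<Rightarrow> complex \<Rightarrow> complex" where
  "riccati_khk a b c h z = ((1 + h * b) * z + 2 * h * c) / (1 - h * b - 2 * h * a * z)"

lemma has_field_derivative_riccati: "(riccati a b c has_field_derivative 2 * a * z + b) (at z)"
  unfolding riccati_def [abs_def] by (auto intro!: derivative_eq_intros)

lemma khk_riccati_eq_riccati_khk: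
  assumes "1 - h * (2 * a * z + b) \<noteq> 0"
  shows "z + 2 * h * riccati a b c z / (1 - h * (2 * a * z + b)) = riccati_khk a b c h z"
  using assms
  by (simp add: riccati_def riccati_khk_def field_simps) (simp add: algebra_simps power2_eq_square)

lemma riccati_khk_scale: "riccati_khk (\<mu> * a) (\<mu> * b) (\<mu> * c) h = riccati_khk a b c (\<mu> * h)"
  by (simp add: fun_eq_iff riccati_khk_def ac_simps)

text \<open>Both composites are the Moebius map of (I + hK)(I + kK) = (I + kK)(I + hK). Since x / 0 = 0
  they agree even where the outer denominator vanishes, so only the inner ones are constrained.\<close>

lemma riccati_khk_commute:
  assumes "1 - h * b - 2 * h * a * z \<noteq> 0" and "1 - k * b - 2 * k * a * z \<noteq> 0"
  shows "riccati_khk a b c h (riccati_khk a b c k z) = riccati_khk a b c k (riccati_khk a b c h z)"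
proof -
  have "riccati_khk a b c h (riccati_khk a b c k z) =
    ((1 + h*b) * ((1 + k*b) * z + 2*k*c) + 2*h*c * (1 - k*b - 2*k*a*z)) /
    ((1 - h*b) * (1 - k*b - 2*k*a*z) - 2*h*a * ((1 + k*b) * z + 2*k*c))"
    if "1 - k * b - 2 * k * a * z \<noteq> 0" for h k
    using that by (simp add: riccati_khk_def divide_simps)
  then show ?thesis
    using assms by (simp add: algebra_simps)
qed

lemma has_field_derivative_riccati_khk:
  assumes "1 - h * b - 2 * h * a * z \<noteq> 0"
  shows "(riccati_khk a b c h has_field_derivative
     (1 - h^2 * (b^2 - 4 * a * c)) / (1 - h * b - 2 * h * a * z)^2) (at z)"
  unfolding riccati_khk_def [abs_def] using assms
  by (auto intro!: derivative_eq_intros simp: field_simps power2_eq_square)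

lemma riccati_riccati_khk:
  assumes "1 - h * b - 2 * h * a * z \<noteq> 0"
  shows "riccati a b c (riccati_khk a b c h z) =
    (1 - h^2 * (b^2 - 4 * a * c)) / (1 - h * b - 2 * h * a * z)^2 * riccati a b c z"
proof -
  define N D where "N = (1 + h * b) * z + 2 * h * c" and "D = 1 - h * b - 2 * h * a * z"
  have "D \<noteq> 0"
    using assms by (simp add: D_def)
  then have "riccati a b c (N / D) = (a * N^2 + b * N * D + c * D^2) / D^2"
    by (simp add: riccati_def field_simps power2_eq_square)
  also have "a * N^2 + b * N * D + c * D^2 = (1 - h^2 * (b^2 - 4 * a * c)) * riccati a b c z"
    unfolding N_def D_def riccati_def by algebra
  finally show ?thesis
    by (simp add: riccati_khk_def N_def D_def)
qed

lemma riccati_khk_S1: "riccati_khk 1 \<i> 0 h z = (1 + \<i> * h) * z / (1 - \<i> * h - 2 * h * z)"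
  by (simp add: riccati_khk_def algebra_simps)

lemma riccati_khk_S1_add_i:
  assumes "1 - \<i> * h - 2 * h * z \<noteq> 0"
  shows "riccati_khk 1 \<i> 0 h z + \<i> = (1 - \<i> * h) * (z + \<i>) / (1 - \<i> * h - 2 * h * z)"
  using assms by (simp add: riccati_khk_S1 field_simps)

lemma cmod_one_pm_i_real:
  "(cmod (1 + \<i> * of_real e))^2 = 1 + e^2" "(cmod (1 - \<i> * of_real e))^2 = 1 + e^2"
  by (simp_all add: cmod_power2)

lemma one_plus_two_Im: "1 + 2 * Im w = (cmod (w + \<i>))^2 - (cmod w)^2"
  unfolding cmod_power2 by (simp add: power2_eq_square algebra_simps)

lemma cmod_riccati_khk_S1:
  "(cmod (riccati_khk 1 \<i> 0 (of_real e) z))^2 =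
    (1 + e^2) / (cmod (1 - \<i> * of_real e - 2 * of_real e * z))^2 * (cmod z)^2"
  by (simp add: riccati_khk_S1 norm_divide norm_mult power_divide power_mult_distrib
      cmod_one_pm_i_real)

lemma Im_riccati_khk_S1:
  assumes "1 - \<i> * of_real e - 2 * of_real e * z \<noteq> 0"
  shows "1 + 2 * Im (riccati_khk 1 \<i> 0 (of_real e) z) =
    (1 + e^2) / (cmod (1 - \<i> * of_real e - 2 * of_real e * z))^2 * (1 + 2 * Im z)"
  unfolding one_plus_two_Im riccati_khk_S1_add_i [OF assms] cmod_riccati_khk_S1
  by (simp add: norm_divide norm_mult power_divide power_mult_distrib cmod_one_pm_i_real
      right_diff_distrib)

lemma has_field_derivative_riccati_khk_S1:
  assumes "1 - \<i> * h - 2 * h * z \<noteq> 0"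
  shows "(riccati_khk 1 \<i> 0 h has_field_derivative
    (1 + h^2) / (1 - \<i> * h - 2 * h * z)^2) (at z)"
  using has_field_derivative_riccati_khk [of h \<i> 1 z 0] assms by (simp add: algebra_simps)

lemma riccati_S1_riccati_khk:
  assumes "1 - \<i> * h - 2 * h * z \<noteq> 0"
  shows "riccati 1 \<i> 0 (riccati_khk 1 \<i> 0 h z) =
    (1 + h^2) / (1 - \<i> * h - 2 * h * z)^2 * riccati 1 \<i> 0 z"
  using riccati_riccati_khk [of h \<i> 1 z 0] assms by (simp add: algebra_simps)

lemma complex_of_vec_planar [simp]: "complex_of_vec (planar g p) = g (complex_of_vec p)"
  by (simp add: planar_def)

lemma S1_eq_planar: "S1 = planar (riccati 1 \<i> 0)"
  by (simp add: fun_eq_iff vec_eq_iff forall_2 S1_def Let_def planar_def riccati_def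
      power2_eq_square algebra_simps)

lemma Y1_eq_planar: "Y1 = planar (riccati (- \<i>) 1 0)"
  by (simp add: fun_eq_iff vec_eq_iff forall_2 Y1_def Let_def planar_def riccati_def
      power2_eq_square algebra_simps)

lemma Dden_eq: "Dden e p = (cmod (1 - \<i> * of_real e - 2 * of_real e * complex_of_vec p))^2"
  unfolding cmod_power2 by (simp add: Dden_def Let_def power2_eq_square algebra_simps)

text \<open>No hypothesis is needed: where Dden e p = 0 both sides are 0, as x / 0 = 0.\<close>

lemma Phi1_eq_planar: "Phi1 e = planar (riccati_khk 1 \<i> 0 (of_real e))"
proof
  fix p :: "real^2"
  define x y where "x = p$1" and "y = p$2"
  define den where "den = 1 - \<i> * of_real e - 2 * of_real e * complex_of_vec p"
  have den_parts: "Re den = 1 - 2 * e * x" "Im den = - e - 2 * e * y"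
    by (simp_all add: den_def x_def y_def)
  have D: "Dden e p = (Re den)^2 + (Im den)^2"
    by (simp add: Dden_eq den_def cmod_power2)
  have "riccati_khk 1 \<i> 0 (of_real e) (complex_of_vec p) =
      (1 + \<i> * of_real e) * complex_of_vec p / den"
    by (simp add: riccati_khk_def den_def algebra_simps)
  then show "Phi1 e p = planar (riccati_khk 1 \<i> 0 (of_real e)) p"
    unfolding planar_def
    by (simp add: vec_eq_iff forall_2 Phi1_def Let_def D Re_divide Im_divide den_parts)
      (simp add: x_def y_def algebra_simps power2_eq_square)
qed

lemma khk_defined_Y1:
  "khk_defined Y1 d p \<longleftrightarrow> 1 - of_real d + 2 * \<i> * of_real d * complex_of_vec p \<noteq> 0"
  by (simp add: Y1_eq_planar khk_defined_planar [OF has_field_derivative_riccati] algebra_simps)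

lemma Psi1_eq_planar:
  assumes "khk_defined Y1 d p"
  shows "Psi1 d p = planar (riccati_khk 1 \<i> 0 (- \<i> * of_real d)) p"
proof -
  have den: "1 - of_real d * (2 * - \<i> * complex_of_vec p + 1) \<noteq> 0"
    using assms by (simp add: khk_defined_Y1 algebra_simps)
  have "Psi1 d p = planar (\<lambda>z. z + 2 * of_real d * riccati (- \<i>) 1 0 z /
      (1 - of_real d * (2 * - \<i> * complex_of_vec p + 1))) p"
    unfolding Psi1_def Y1_eq_planar using khk_planar [OF has_field_derivative_riccati den] .
  also have "\<dots> = planar (riccati_khk (- \<i>) 1 0 d) p"
    using khk_riccati_eq_riccati_khk [OF den] by (simp add: planar_def)
  also have "riccati_khk (- \<i>) 1 0 d = riccati_khk 1 \<i> 0 (- \<i> * of_real d)"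
    using riccati_khk_scale [of "- \<i>" 1 \<i> 0] by simp
  finally show ?thesis .
qed

lemma H1_eq: "H1 p = (cmod (complex_of_vec p))^2 / (1 + 2 * Im (complex_of_vec p))"
  by (simp add: H1_def Let_def cmod_power2)

lemma Phi1_first_integral:
  assumes "Dden e p \<noteq> 0"
  shows "H1 (Phi1 e p) = H1 p"
proof -
  define z where "z = complex_of_vec p"
  define den where "den = 1 - \<i> * of_real e - 2 * of_real e * z"
  have "den \<noteq> 0"
    using assms by (simp add: Dden_eq den_def z_def)
  moreover have "1 + e^2 \<noteq> 0"
    using zero_le_power2 [of e] by linarith
  ultimately have "(1 + e^2) / (cmod den)^2 \<noteq> 0"
    by simp
  then show ?thesis
    unfolding H1_eq Phi1_eq_planar complex_of_vec_planar
    using Im_riccati_khk_S1 [OF \<open>den \<noteq> 0\<close> [unfolded den_def]]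
    by (simp add: cmod_riccati_khk_S1 den_def z_def)
qed

lemma
  assumes "Dden e p \<noteq> 0"
  shows differentiable_Phi1: "Phi1 e differentiable (at p)"
    and jac_Phi1: "jac (Phi1 e) p =
      cmult_matrix
        ((1 + (of_real e)^2) / (1 - \<i> * of_real e - 2 * of_real e * complex_of_vec p)^2)"
proof -
  have "1 - \<i> * of_real e - 2 * of_real e * complex_of_vec p \<noteq> 0"
    using assms by (simp add: Dden_eq)
  note deriv = has_field_derivative_riccati_khk_S1 [OF this]
  show "Phi1 e differentiable (at p)"
    unfolding Phi1_eq_planar using has_derivative_planar [OF deriv] by (rule differentiableI)
  show "jac (Phi1 e) p =
      cmult_matrix
        ((1 + (of_real e)^2) / (1 - \<i> * of_real e - 2 * of_real e * complex_of_vec p)^2)"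
    unfolding Phi1_eq_planar using jac_planar [OF deriv] by simp
qed

lemma Phi1_lie_symmetry:
  assumes "Dden e p \<noteq> 0"
  shows "S1 (Phi1 e p) = jac (Phi1 e) p *v S1 p"
proof -
  have "1 - \<i> * of_real e - 2 * of_real e * complex_of_vec p \<noteq> 0"
    using assms by (simp add: Dden_eq)
  then show ?thesis
    unfolding jac_Phi1 [OF assms]
    by (simp add: cmult_matrix_mult S1_eq_planar Phi1_eq_planar planar_def
        riccati_S1_riccati_khk)
qed

lemma Phi1_invariant_density:
  assumes "Dden e p \<noteq> 0"
  shows "nu1 (Phi1 e p) * \<bar>det (jac (Phi1 e) p)\<bar> = nu1 p"
proof -
  define z where "z = complex_of_vec p"
  define den where "den = 1 - \<i> * of_real e - 2 * of_real e * z"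
  define c where "c = (1 + e^2) / (cmod den)^2"
  have "den \<noteq> 0"
    using assms by (simp add: Dden_eq den_def z_def)
  moreover have "1 + e^2 \<noteq> 0"
    using zero_le_power2 [of e] by linarith
  ultimately have "c \<noteq> 0"
    by (simp add: c_def)
  have "cmod (1 + (of_real e)^2) = 1 + e^2"
    using norm_of_real [of "1 + e^2"] zero_le_power2 [of e] by simp
  then have "\<bar>det (jac (Phi1 e) p)\<bar> = c^2"
    by (simp add: jac_Phi1 [OF assms] det_cmult_matrix norm_divide norm_power c_def den_def z_def
        power_divide)
  moreover have "1 + 2 * Phi1 e p $ 2 = c * (1 + 2 * p $ 2)"
    using Im_riccati_khk_S1 [OF \<open>den \<noteq> 0\<close> [unfolded den_def]]
    by (simp add: Phi1_eq_planar planar_def c_def den_def z_def)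
  ultimately show ?thesis
    using \<open>c \<noteq> 0\<close> by (simp add: nu1_def power_mult_distrib)
qed

lemma Psi1_Phi1_commute:
  assumes "Dden e p \<noteq> 0" and "khk_defined Y1 d p" and "khk_defined Y1 d (Phi1 e p)"
  shows "Psi1 d (Phi1 e p) = Phi1 e (Psi1 d p)"
proof -
  define z where "z = complex_of_vec p"
  have "1 - \<i> * of_real e - 2 * of_real e * z \<noteq> 0"
    using assms(1) by (simp add: Dden_eq z_def)
  moreover have "1 - of_real d + 2 * \<i> * of_real d * z \<noteq> 0"
    using assms(2) by (simp add: khk_defined_Y1 z_def)
  ultimately have "riccati_khk 1 \<i> 0 (- \<i> * of_real d) (riccati_khk 1 \<i> 0 (of_real e) z) =
      riccati_khk 1 \<i> 0 (of_real e) (riccati_khk 1 \<i> 0 (- \<i> * of_real d) z)"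
    by (intro riccati_khk_commute) (simp_all add: algebra_simps)
  then show ?thesis
    unfolding Psi1_eq_planar [OF assms(3)] Psi1_eq_planar [OF assms(2)]
    unfolding Phi1_eq_planar by (simp add: planar_def z_def)
qed

theorem proposition8:
  shows "(\<forall>e::real. first_integral_on
            {p. Dden e p \<noteq> 0 \<and> 1 + 2 * p$2 \<noteq> 0 \<and> 1 + 2 * (Phi1 e p)$2 \<noteq> 0}
            H1 (Phi1 e))
       \<and> (\<forall>e::real. lie_symmetry_on {p. Dden e p \<noteq> 0} S1 (Phi1 e))
       \<and> (\<forall>e::real. invariant_density_on
            {p. Dden e p \<noteq> 0 \<and> 1 + 2 * p$2 \<noteq> 0 \<and> 1 + 2 * (Phi1 e p)$2 \<noteq> 0}
            nu1 (Phi1 e))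
       \<and> (\<forall>e d :: real. \<forall>p.
            Dden e p \<noteq> 0 \<and> khk_defined Y1 d p \<and>
            khk_defined Y1 d (Phi1 e p) \<and> Dden e (Psi1 d p) \<noteq> 0 \<longrightarrow>
            Psi1 d (Phi1 e p) = Phi1 e (Psi1 d p))"
  unfolding first_integral_on_def lie_symmetry_on_def invariant_density_on_def
  using Phi1_first_integral differentiable_Phi1 Phi1_lie_symmetry Phi1_invariant_density
    Psi1_Phi1_commute
  by blast

end
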